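(* Let $(x_k)_{k\ge0}$ be indeterminates, define $a_n=x_n$ if $n=2^k-1$ for some integer $k\ge0$ and $a_n=0$ otherwise, and let $d(n)=\det\left(a_{i+j}\right)_{i,j=0}^{n-1}$ and $D(n)=\det\left(a_{i+j+1}\right)_{i,j=0}^{n-1}$, with $d(0)=D(0)=1$. Then for all $n\ge0$, $$\frac{d(n)\,d(n+1)}{D(n)^2}=(-1)^n x_0.$$ *)

theory Defs
  imports "HOL-Library.Poly_Mapping" "HOL-Computational_Algebra.Fraction_Field"
    "Jordan_Normal_Form.Determinant"
begin

text \<open>Integer polynomials in the countably many indeterminates x_0, x_1, ...:
  monomials are finitely supported exponent vectors (poly_mapping nat nat).\<close>
type_synonym ipoly = "(nat \<Rightarrow>\<^sub>0 nat) \<Rightarrow>\<^sub>0 int"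

definition var :: "nat \<Rightarrow> ipoly" where
  "var k = Poly_Mapping.single (Poly_Mapping.single k 1) 1"

definition aseq :: "nat \<Rightarrow> ipoly" where
  "aseq n = (if \<exists>k::nat. n = 2 ^ k - 1 then var n else 0)"

definition hd_det :: "nat \<Rightarrow> ipoly" where
  "hd_det n = det (mat n n (\<lambda>(i, j). aseq (i + j)))"

definition hD_det :: "nat \<Rightarrow> ipoly" where
  "hD_det n = det (mat n n (\<lambda>(i, j). aseq (i + j + 1)))"

end

theory Submission
  imports Defs
begin

(* For 2^p <= n < 2^(p+1), an entry a_(i+j) or a_(i+j+1) of the n x n Hankel matrices whose row
  or column index is at least about 2^p has its index in the window [2^p, 2^(p+2) - 2], which
  contains exactly one number of the form 2^t - 1, namely 2^(p+1) - 1.  So the bottom-right border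
  of each matrix is a partial antidiagonal of copies of x_(2^(p+1)-1), and expanding along it
  reduces d(n), d(n+1) and D(n) to signed powers of that variable times d(q+1), d(q) and D(q),
  where q = 2^(p+1) - 1 - n < n.  Strong induction on n finishes the proof: the powers of
  x_(2^(p+1)-1) cancel, and the sign flips because n + q is odd. *)

lemma det_single_nonzero_in_row:
  fixes A :: "'a::comm_ring_1 mat"
  assumes A: "A \<in> carrier_mat n n" and i: "i < n" and j0: "j0 < n"
    and zero: "\<And>j. j < n \<Longrightarrow> j \<noteq> j0 \<Longrightarrow> A $$ (i, j) = 0"
  shows "det A = (-1) ^ (i + j0) * A $$ (i, j0) * det (mat_delete A i j0)"
proof -
  have "det A = (\<Sum>j<n. A $$ (i, j) * cofactor A i j)"
    by (rule laplace_expansion_row[OF A i])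
  also have "\<dots> = A $$ (i, j0) * cofactor A i j0"
    using zero j0 by (simp add: sum.remove[of _ j0] sum.neutral)
  finally show ?thesis by (simp add: cofactor_def)
qed

lemma det_single_nonzero_in_col:
  fixes A :: "'a::comm_ring_1 mat"
  assumes A: "A \<in> carrier_mat n n" and j: "j < n" and i0: "i0 < n"
    and zero: "\<And>i. i < n \<Longrightarrow> i \<noteq> i0 \<Longrightarrow> A $$ (i, j) = 0"
  shows "det A = (-1) ^ (i0 + j) * A $$ (i0, j) * det (mat_delete A i0 j)"
proof -
  have "det A = (\<Sum>i<n. A $$ (i, j) * cofactor A i j)"
    by (rule laplace_expansion_column[OF A j])
  also have "\<dots> = A $$ (i0, j) * cofactor A i0 j"
    using zero i0 by (simp add: sum.remove[of _ i0] sum.neutral)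
  finally show ?thesis by (simp add: cofactor_def)
qed

definition antidiagonal_border :: "nat \<Rightarrow> nat \<Rightarrow> 'a::zero \<Rightarrow> (nat \<Rightarrow> nat \<Rightarrow> 'a) \<Rightarrow> bool" where
  "antidiagonal_border r m c f \<longleftrightarrow>
     (\<forall>i < r + m. \<forall>j < r + m. r + m div 2 \<le> i \<or> r + m div 2 \<le> j \<longrightarrow>
        f i j = (if i + j = 2 * r + m - 1 then c else 0))"

lemma antidiagonal_border_delete:
  assumes "antidiagonal_border r (m + 2) c f"
  shows "antidiagonal_border r m c (\<lambda>i j. f (insert_index r i) (insert_index r j))"
  unfolding antidiagonal_border_def
proof (intro allI impI)
  fix i j assume "i < r + m" "j < r + m" "r + m div 2 \<le> i \<or> r + m div 2 \<le> j"
  then show "f (insert_index r i) (insert_index r j) = (if i + j = 2 * r + m - 1 then c else 0)"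
    using assms[unfolded antidiagonal_border_def, rule_format,
        of "insert_index r i" "insert_index r j"]
    by (auto simp: insert_index_def split: if_splits)
qed

lemma det_antidiagonal_border_step:
  fixes f :: "nat \<Rightarrow> nat \<Rightarrow> 'a::comm_ring_1"
  assumes border: "antidiagonal_border r (m + 2) c f"
  shows "det (mat (r + m + 2) (r + m + 2) (\<lambda>(i, j). f i j))
    = - (c ^ 2) * det (mat (r + m) (r + m) (\<lambda>(i, j). f (insert_index r i) (insert_index r j)))"
proof -
  define n where "n = r + m"
  define A where "A = mat (Suc (Suc n)) (Suc (Suc n)) (\<lambda>(i, j). f i j)"
  define B where "B = mat_delete A (Suc n) r"
  have r: "r \<le> n" by (simp add: n_def)
  have f: "f i j = (if i + j = n + r + 1 then c else 0)"
    if "i < Suc (Suc n)" "j < Suc (Suc n)" "r + m div 2 < i \<or> r + m div 2 < j" for i j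
    using border that unfolding antidiagonal_border_def n_def by auto
  have last_row: "f (Suc n) j = (if j = r then c else 0)" if "j < Suc (Suc n)" for j
    using f[of "Suc n" j] that div_le_dividend[of m 2] by (auto simp: n_def)
  have last_col: "f i (Suc n) = (if i = r then c else 0)" if "i < Suc (Suc n)" for i
    using f[of i "Suc n"] that div_le_dividend[of m 2] by (auto simp: n_def)
  have B: "B \<in> carrier_mat (Suc n) (Suc n)"
    unfolding B_def A_def mat_delete_def by auto
  have B_entry: "B $$ (i, j) = f i (insert_index r j)" if "i < Suc n" "j < Suc n" for i j
    using that unfolding B_def A_def mat_delete_def insert_index_def by auto
  have "det A = (-1) ^ (Suc n + r) * c * det B"
    unfolding B_def
    by (subst det_single_nonzero_in_row[of A "Suc (Suc n)" "Suc n" r])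
      (use r in \<open>auto simp: A_def last_row\<close>)
  also have "det B = (-1) ^ (r + n) * c * det (mat_delete B r n)"
    by (subst det_single_nonzero_in_col[OF B, of n r])
      (use r in \<open>auto simp: B_entry last_col insert_index_def\<close>)
  also have "mat_delete B r n
      = mat (r + m) (r + m) (\<lambda>(i, j). f (insert_index r i) (insert_index r j))"
    using B by (intro eq_matI) (auto simp: mat_delete_def B_entry n_def insert_index_def)
  finally have "det A = ((-1) ^ (Suc n + r) * (-1) ^ (r + n)) * c ^ 2
      * det (mat (r + m) (r + m) (\<lambda>(i, j). f (insert_index r i) (insert_index r j)))"
    by (simp add: power2_eq_square ac_simps)
  then show ?thesis by (simp add: A_def n_def add.commute)
qed

lemma det_antidiagonal_border:
  fixes f :: "nat \<Rightarrow> nat \<Rightarrow> 'a::comm_ring_1"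
  assumes "antidiagonal_border r m c f"
  shows "det (mat (r + m) (r + m) (\<lambda>(i, j). f i j))
    = (-1) ^ (m div 2) * c ^ m * det (mat r r (\<lambda>(i, j). f i j))"
  using assms
proof (induction m arbitrary: f rule: less_induct)
  case (less m)
  consider "m = 0" | "m = 1" | m' where "m = m' + 2"
    by (metis One_nat_def add_2_eq_Suc' not0_implies_Suc)
  then show ?case
  proof cases
    case 1
    then show ?thesis by simp
  next
    case 2
    let ?A = "mat (r + 1) (r + 1) (\<lambda>(i, j). f i j)"
    have "det ?A = (-1) ^ (r + r) * c * det (mat_delete ?A r r)"
      using less.prems 2 unfolding antidiagonal_border_def
      by (subst det_single_nonzero_in_row[of ?A "r + 1" r r]) auto
    also have "mat_delete ?A r r = mat r r (\<lambda>(i, j). f i j)"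
      by (intro eq_matI) (auto simp: mat_delete_def)
    finally show ?thesis using 2 by (simp flip: mult_2)
  next
    case 3
    let ?g = "\<lambda>i j. f (insert_index r i) (insert_index r j)"
    have "det (mat (r + m) (r + m) (\<lambda>(i, j). f i j))
        = - (c ^ 2) * det (mat (r + m') (r + m') (\<lambda>(i, j). ?g i j))"
      using det_antidiagonal_border_step less.prems 3 by (simp add: add.assoc)
    also have "\<dots> = - (c ^ 2) * ((-1) ^ (m' div 2) * c ^ m' * det (mat r r (\<lambda>(i, j). ?g i j)))"
      using less.IH[of m' ?g] antidiagonal_border_delete[of r m' c f] less.prems 3 by simp
    also have "mat r r (\<lambda>(i, j). ?g i j) = mat r r (\<lambda>(i, j). f i j)"
      by (intro eq_matI) auto
    finally show ?thesis using 3 by (simp add: power_add power2_eq_square algebra_simps)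
  qed
qed

lemma det_hankel_antidiagonal_border:
  fixes h :: "nat \<Rightarrow> 'a::comm_ring_1"
  assumes "\<And>s. r + m div 2 \<le> s \<Longrightarrow> s + 2 \<le> 2 * (r + m) \<Longrightarrow>
    h s = (if s = 2 * r + m - 1 then c else 0)"
  shows "det (mat (r + m) (r + m) (\<lambda>(i, j). h (i + j)))
    = (-1) ^ (m div 2) * c ^ m * det (mat r r (\<lambda>(i, j). h (i + j)))"
proof (rule det_antidiagonal_border, unfold antidiagonal_border_def, intro allI impI)
  fix i j assume "i < r + m" "j < r + m" "r + m div 2 \<le> i \<or> r + m div 2 \<le> j"
  then show "h (i + j) = (if i + j = 2 * r + m - 1 then c else 0)"
    by (intro assms) auto
qed

lemma aseq_between_powers:
  assumes "2 ^ p \<le> s" "s + 2 \<le> 4 * 2 ^ p"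
  shows "aseq s = (if s = 2 * 2 ^ p - 1 then var (2 * 2 ^ p - 1) else 0)"
proof -
  have "(\<exists>t::nat. s = 2 ^ t - 1) \<longleftrightarrow> s = 2 * 2 ^ p - 1"
  proof
    assume "\<exists>t::nat. s = 2 ^ t - 1"
    then obtain t :: nat where t: "s = 2 ^ t - 1" by blast
    moreover have "(2::nat) ^ t = 2 ^ t - 1 + 1" "(2::nat) ^ (p + 2) = 4 * 2 ^ p" by simp_all
    ultimately have "(2::nat) ^ p < 2 ^ t" "(2::nat) ^ t < 2 ^ (p + 2)" using assms by linarith+
    then have "p < t" "t < p + 2" by (auto intro: power_less_imp_less_exp[of 2])
    then have "t = Suc p" by simp
    with t show "s = 2 * 2 ^ p - 1" by simp
  next
    assume "s = 2 * 2 ^ p - 1"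
    then show "\<exists>t::nat. s = 2 ^ t - 1" by (intro exI[of _ "Suc p"]) simp
  qed
  then show ?thesis unfolding aseq_def by auto
qed

lemma hd_det_reflect:
  assumes "2 ^ p \<le> n" "n \<le> 2 * 2 ^ p"
  shows "hd_det n = (-1) ^ (n - 2 ^ p) * var (2 * 2 ^ p - 1) ^ (2 * (n - 2 ^ p))
    * hd_det (2 * 2 ^ p - n)"
proof -
  define r where "r = 2 * 2 ^ p - n"
  define m where "m = 2 * (n - 2 ^ p)"
  have n: "n = r + m" and K: "r + m div 2 = 2 ^ p" "2 * r + m - 1 = 2 * 2 ^ p - 1"
    using assms by (simp_all add: r_def m_def)
  have "hd_det n = (-1) ^ (m div 2) * var (2 * 2 ^ p - 1) ^ m * hd_det r"
    unfolding n hd_det_def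
  proof (rule det_hankel_antidiagonal_border)
    fix s assume "r + m div 2 \<le> s" "s + 2 \<le> 2 * (r + m)"
    then have "2 ^ p \<le> s" "s + 2 \<le> 4 * 2 ^ p" using assms(2) n K by auto
    then show "aseq s = (if s = 2 * r + m - 1 then var (2 * 2 ^ p - 1) else 0)"
      unfolding K by (rule aseq_between_powers)
  qed
  then show ?thesis by (simp add: r_def m_def)
qed

lemma hD_det_reflect:
  assumes "2 ^ p \<le> n" "n < 2 * 2 ^ p"
  shows "hD_det n = (-1) ^ (n - 2 ^ p) * var (2 * 2 ^ p - 1) ^ (2 * (n - 2 ^ p) + 1)
    * hD_det (2 * 2 ^ p - 1 - n)"
proof -
  define r where "r = 2 * 2 ^ p - 1 - n"
  define m where "m = 2 * (n - 2 ^ p) + 1"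
  have n: "n = r + m" and K: "r + m div 2 = 2 ^ p - 1" "2 * r + m - 1 = 2 * 2 ^ p - 2"
    using assms by (simp_all add: r_def m_def)
  have "hD_det n = (-1) ^ (m div 2) * var (2 * 2 ^ p - 1) ^ m * hD_det r"
    unfolding n hD_det_def
  proof (rule det_hankel_antidiagonal_border)
    fix s assume "r + m div 2 \<le> s" "s + 2 \<le> 2 * (r + m)"
    then have "2 ^ p \<le> s + 1" "s + 1 + 2 \<le> 4 * 2 ^ p" using assms(2) n K by auto
    moreover have "s + 1 = 2 * 2 ^ p - 1 \<longleftrightarrow> s = 2 * 2 ^ p - 2"
      using one_le_power[of "2::nat" p] by linarith
    ultimately show "aseq (s + 1) = (if s = 2 * r + m - 1 then var (2 * 2 ^ p - 1) else 0)"
      unfolding K using aseq_between_powers by presburger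
  qed
  then show ?thesis by (simp add: r_def m_def)
qed

lemma minus_one_power_odd_sum:
  assumes "odd (m + n)"
  shows "(-1 :: 'a::ring_1) ^ m = - ((-1) ^ n)"
  using assms by (cases "even m") (auto simp: neg_one_even_power neg_one_odd_power)

lemma var_nonzero: "var k \<noteq> 0"
  unfolding var_def by (metis lookup_single_eq lookup_zero zero_neq_one)

lemma hd_det_0: "hd_det 0 = 1" and hD_det_0: "hD_det 0 = 1"
  unfolding hd_det_def hD_det_def by simp_all

lemma hd_det_1: "hd_det 1 = var 0"
proof -
  have "aseq 0 = var 0" unfolding aseq_def by (metis diff_self_eq_0 power_0)
  then show ?thesis unfolding hd_det_def by (subst det_single) auto
qed

lemma hD_det_nonzero: "hD_det n \<noteq> 0"
proof (induction n rule: less_induct)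
  case (less n)
  show ?case
  proof (cases "n = 0")
    case True
    then show ?thesis by (simp add: hD_det_0)
  next
    case False
    then obtain p where p: "2 ^ p \<le> n" "n < 2 * 2 ^ p"
      using ex_power_ivl1[of 2 n] by auto
    then have "hD_det (2 * 2 ^ p - 1 - n) \<noteq> 0" by (intro less.IH) simp
    then show ?thesis using hD_det_reflect[OF p] var_nonzero by simp
  qed
qed

lemma hd_det_mult_hd_det_Suc: "hd_det n * hd_det (n + 1) = (-1) ^ n * var 0 * (hD_det n)\<^sup>2"
proof (induction n rule: less_induct)
  case (less n)
  show ?case
  proof (cases "n = 0")
    case True
    then show ?thesis using hd_det_1 by (simp add: hd_det_0 hD_det_0)
  next
    case False
    then obtain p where p: "2 ^ p \<le> n" "n < 2 * 2 ^ p"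
      using ex_power_ivl1[of 2 n] by auto
    define e where "e = n - 2 ^ p"
    define q where "q = 2 * 2 ^ p - 1 - n"
    define c where "c = var (2 * 2 ^ p - 1)"
    have q: "q < n" "odd (n + q)"
      using p by (auto simp: q_def)
    have idx: "2 * 2 ^ p - n = q + 1" "2 * 2 ^ p - (n + 1) = q" "n + 1 - 2 ^ p = e + 1"
      using p by (auto simp: q_def e_def)
    have hd: "hd_det n = (-1) ^ e * c ^ (2 * e) * hd_det (q + 1)"
      using hd_det_reflect[of p n, unfolded idx, folded e_def c_def] p by simp
    have hd_Suc: "hd_det (n + 1) = (-1) ^ (e + 1) * c ^ (2 * (e + 1)) * hd_det q"
      using hd_det_reflect[of p "n + 1", unfolded idx, folded c_def] p by simp
    have hD: "hD_det n = (-1) ^ e * c ^ (2 * e + 1) * hD_det q"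
      using hD_det_reflect[OF p, folded e_def c_def q_def] .
    have "hd_det n * hd_det (n + 1) = - (c ^ (2 * e + 1))\<^sup>2 * (hd_det q * hd_det (q + 1))"
      unfolding hd hd_Suc by (simp add: power2_eq_square power_add algebra_simps)
    also have "\<dots> = (-1) ^ n * var 0 * (hD_det n)\<^sup>2"
      unfolding less.IH[OF q(1)] hD minus_one_power_odd_sum[OF q(2)]
      by (simp add: power_mult_distrib power2_eq_square algebra_simps)
    finally show ?thesis .
  qed
qed

theorem lemma5p8:
  fixes n :: nat
  shows "to_fract (hd_det n * hd_det (n + 1)) / (to_fract (hD_det n))\<^sup>2
           = to_fract ((-1) ^ n * var 0)"
proof -
  have "to_fract (hD_det n) \<noteq> 0" using hD_det_nonzero by simp
  then show ?thesis unfolding hd_det_mult_hd_det_Suc power2_eq_square by simp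
qed

end
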